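(* Let $G=(V,E)$ be a finite $k$-regular graph, and suppose that the minimal cycle of $G$ has length $n$. Then: (1) the lift $L[G]$ is a $k$-regular graph; (2) the minimal cycle of $L[G]$ has length $2n$.
   Context: Graphs are simple (irreflexive, symmetric edge relation). A cycle of length $m\geq 3$ is a sequence of pairwise distinct vertices $v_1,\dots,v_m$ with $v_iv_{i+1}$ an edge for $i<m$ and $v_mv_1$ an edge. The lift $L[G]$ of a finite graph $G=(V,E)$ is the graph with vertex set $V\times\{0,1\}^{E}$ (pairs of a vertex and a function from the edge set to $\{0,1\}$), where $(u,f)$ and $(v,g)$ are adjacent if and only if $e=\{u,v\}\in E$, $f(e)\neq g(e)$, and $f(e')=g(e')$ for every edge $e'\neq e$. *)

theory Defs
  imports "HOL-Library.FuncSet"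
begin

type_synonym 'a graph = "'a set \<times> 'a set set"

definition simple_graph :: "'a graph \<Rightarrow> bool" where
  "simple_graph G \<longleftrightarrow> finite (fst G) \<and>
     (\<forall>e\<in>snd G. \<exists>u v. u \<in> fst G \<and> v \<in> fst G \<and> u \<noteq> v \<and> e = {u, v})"

definition adj :: "'a graph \<Rightarrow> 'a \<Rightarrow> 'a \<Rightarrow> bool" where
  "adj G u v \<longleftrightarrow> {u, v} \<in> snd G"

definition degree :: "'a graph \<Rightarrow> 'a \<Rightarrow> nat" where
  "degree G v = card {u \<in> fst G. adj G v u}"

definition regular :: "'a graph \<Rightarrow> nat \<Rightarrow> bool" where
  "regular G k \<longleftrightarrow> (\<forall>v\<in>fst G. degree G v = k)"

definition is_cycle :: "'a graph \<Rightarrow> 'a list \<Rightarrow> bool" where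
  "is_cycle G vs \<longleftrightarrow> length vs \<ge> 3 \<and> distinct vs \<and> set vs \<subseteq> fst G \<and>
     (\<forall>i. i + 1 < length vs \<longrightarrow> adj G (vs ! i) (vs ! (i + 1))) \<and>
     adj G (last vs) (hd vs)"

definition min_cycle_length :: "'a graph \<Rightarrow> nat \<Rightarrow> bool" where
  "min_cycle_length G n \<longleftrightarrow>
     (\<exists>vs. is_cycle G vs \<and> length vs = n) \<and> (\<forall>vs. is_cycle G vs \<longrightarrow> n \<le> length vs)"

text \<open>The lift L[G]: vertices V x {0,1}^E (functions E -> bool, extensional),
(u,f) ~ (v,g) iff {u,v} in E, f and g differ exactly at {u,v}.\<close>

definition lift :: "'a graph \<Rightarrow> ('a \<times> ('a set \<Rightarrow> bool)) graph" where
  "lift G = (let V = fst G; E = snd G; W = V \<times> (E \<rightarrow>\<^sub>E (UNIV :: bool set)) in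
     (W, {{(u, f), (v, g)} | u f v g. (u, f) \<in> W \<and> (v, g) \<in> W \<and> {u, v} \<in> E \<and>
            f {u, v} \<noteq> g {u, v} \<and> (\<forall>e'\<in>E. e' \<noteq> {u, v} \<longrightarrow> f e' = g e')}))"

end

theory Submission
  imports Defs
begin

text \<open>
  A vertex \<open>(u, f)\<close> of \<open>L[G]\<close> has exactly one neighbour over each neighbour \<open>v\<close> of \<open>u\<close>,
  namely \<open>(v, f')\<close> where \<open>f'\<close> is \<open>f\<close> with the bit of the edge \<open>{u, v}\<close> toggled; hence \<open>L[G]\<close>
  is again \<open>k\<close>-regular.

  A cycle of \<open>L[G]\<close> projects to a closed walk in \<open>G\<close> which never backtracks (a backtrack
  would toggle the same bit twice and revisit a vertex of the cycle) and which traverses every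
  edge an even number of times (the bits return to their initial values). Up to its first
  repeated vertex this walk runs along a cycle of \<open>G\<close>, of length at least \<open>n\<close>; the edges of
  that cycle are distinct and each is traversed at least twice, so the lifted cycle has length
  at least \<open>2n\<close>. Conversely, running twice around a shortest cycle of \<open>G\<close> toggles each of
  its edges twice and lifts to a cycle of length exactly \<open>2n\<close>.
\<close>

section \<open>Residues and fibre counts\<close>

lemma Suc_Suc_mod_neq:
  assumes "3 \<le> (m :: nat)"
  shows "Suc (Suc l) mod m \<noteq> l mod m"
proof
  assume "Suc (Suc l) mod m = l mod m"
  then have "m dvd 2"
    using mod_eq_dvd_iff_nat[of l "Suc (Suc l)" m] by simp
  then show False
    using assms by (auto dest: dvd_imp_le)
qed

lemma mod_eq_below_double_iff:
  assumes "a < (n :: nat)" "l < 2 * n"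
  shows "l mod n = a \<longleftrightarrow> l = a \<or> l = a + n"
proof (cases "l < n")
  case False
  then have "l mod n = l - n"
    using assms(2) by (simp add: le_mod_geq)
  then show ?thesis
    using assms False by auto
qed (use assms in auto)

lemma card_residue_class_below:
  assumes "a < (n :: nat)" "j \<le> a + n"
  shows "card {l. l < j \<and> l mod n = a} = (if a < j then 1 else 0)"
proof -
  have "l mod n = a \<longleftrightarrow> l = a" if "l < j" for l
    using mod_eq_below_double_iff[OF assms(1), of l] assms that by auto
  then have "{l. l < j \<and> l mod n = a} = (if a < j then {a} else {})"
    by auto
  then show ?thesis
    by simp
qed

lemma card_fibre_less_Suc:
  "card {l. l < Suc j \<and> f l = y} = card {l. l < j \<and> f l = y} + (if f j = y then 1 else 0)"
proof -
  have "{l. l < Suc j \<and> f l = y} = {l. l < j \<and> f l = y} \<union> (if f j = y then {j} else {})"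
    by (auto simp: less_Suc_eq)
  then show ?thesis
    by simp
qed

lemma card_fibre_twice_period:
  fixes n :: nat
  assumes "\<And>l. f (l + n) = f l"
  shows "card {l. l < 2 * n \<and> f l = y} = 2 * card {l. l < n \<and> f l = y}"
proof -
  let ?S = "{l. l < n \<and> f l = y}"
  have "{l. l < 2 * n \<and> f l = y} = ?S \<union> (\<lambda>l. l + n) ` ?S"
  proof (intro set_eqI iffI)
    fix l
    assume "l \<in> {l. l < 2 * n \<and> f l = y}"
    then show "l \<in> ?S \<union> (\<lambda>l. l + n) ` ?S"
      using assms[of "l - n"] by (cases "l < n") (auto intro!: image_eqI[of _ _ "l - n"])
  qed (use assms in auto)
  moreover have "?S \<inter> (\<lambda>l. l + n) ` ?S = {}"
    by auto
  ultimately show ?thesis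
    by (simp add: card_Un_disjoint card_image)
qed

lemma two_card_le_if_even_fibres:
  assumes "inj_on f S" "S \<subseteq> {..<m}" "\<And>y. even (card {l. l < m \<and> f l = y})"
  shows "2 * card S \<le> m"
proof -
  have fibre_ge_2: "2 \<le> card {l. l < m \<and> f l = y}" if "y \<in> f ` S" for y
  proof -
    have "card {l. l < m \<and> f l = y} \<noteq> 0"
      using that assms(2) by auto
    then show ?thesis
      using assms(3)[of y] by presburger
  qed
  have "2 * card S = (\<Sum>y\<in>f ` S. 2)"
    using assms(1) by (simp add: card_image)
  also have "\<dots> \<le> (\<Sum>y\<in>f ` S. card {l. l < m \<and> f l = y})"
    using fibre_ge_2 by (rule sum_mono)
  also have "\<dots> \<le> (\<Sum>y\<in>f ` {..<m}. card {l. l < m \<and> f l = y})"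
    using assms(2) by (intro sum_mono2) auto
  also have "\<dots> = (\<Sum>y\<in>f ` {..<m}. \<Sum>l\<in>{l\<in>{..<m}. f l = y}. 1)"
    by simp
  also have "\<dots> = m"
    by (subst sum.image_gen[symmetric]) simp_all
  finally show ?thesis .
qed

lemma toggles_parity:
  assumes "\<And>l. l < j \<Longrightarrow> F (Suc l) = (F l)(e l := \<not> F l (e l))"
  shows "F j a = (F 0 a \<noteq> odd (card {l. l < j \<and> e l = a}))"
  using assms by (induction j) (auto simp: card_fibre_less_Suc)

section \<open>Cycles and closed walks\<close>

lemma first_repetition:
  fixes x :: "nat \<Rightarrow> 'a"
  assumes "0 < m" "x m = x 0"
  obtains i j where "i < j" "j \<le> m" "x j = x i" "inj_on x {..<j}"
proof -
  define j where "j = (LEAST j. \<exists>i<j. x i = x j)"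
  have "\<exists>i<m. x i = x m"
    using assms by auto
  then have repeats: "\<exists>i<j. x i = x j" and "j \<le> m"
    unfolding j_def by (fact LeastI, fact Least_le)
  have "inj_on x {..<j}"
  proof (rule inj_onI)
    fix a b
    assume "a \<in> {..<j}" "b \<in> {..<j}" "x a = x b"
    show "a = b"
    proof (rule ccontr)
      assume "a \<noteq> b"
      then have "\<exists>i<max a b. x i = x (max a b)"
        using \<open>x a = x b\<close> by (cases "a < b") (force simp: max_def)+
      moreover have "max a b < j"
        using \<open>a \<in> {..<j}\<close> \<open>b \<in> {..<j}\<close> by simp
      ultimately show False
        unfolding j_def using not_less_Least by blast
    qed
  qed
  with repeats \<open>j \<le> m\<close> that show ?thesis
    by metis
qed

definition cyclic_nth :: "'a list \<Rightarrow> nat \<Rightarrow> 'a" where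
  "cyclic_nth xs l = xs ! (l mod length xs)"

lemma cyclic_nth_add_length: "cyclic_nth xs (l + length xs) = cyclic_nth xs l"
  by (simp add: cyclic_nth_def)

lemma cyclic_nth_in_set: "xs \<noteq> [] \<Longrightarrow> cyclic_nth xs l \<in> set xs"
  by (simp add: cyclic_nth_def)

lemma cyclic_nth_eq_iff:
  assumes "distinct xs" "xs \<noteq> []"
  shows "cyclic_nth xs a = cyclic_nth xs b \<longleftrightarrow> a mod length xs = b mod length xs"
  using assms by (simp add: cyclic_nth_def nth_eq_iff_index_eq)

lemma simple_graph_adjD:
  assumes "simple_graph G" "adj G u v"
  shows "u \<in> fst G" "v \<in> fst G" "u \<noteq> v"
  using assms unfolding simple_graph_def adj_def by (metis doubleton_eq_iff insert_absorb2)+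

lemma simple_graph_finite_edges:
  assumes "simple_graph G"
  shows "finite (snd G)"
proof -
  have "snd G \<subseteq> Pow (fst G)" and "finite (fst G)"
    using assms unfolding simple_graph_def by auto
  then show ?thesis
    by (meson finite_Pow_iff finite_subset)
qed

lemma is_cycle_adj_cyclic_nth:
  assumes "is_cycle G vs"
  shows "adj G (cyclic_nth vs l) (cyclic_nth vs (Suc l))"
proof (cases "Suc (l mod length vs) < length vs")
  case True
  then have "Suc l mod length vs = Suc (l mod length vs)"
    by (simp add: mod_Suc)
  then show ?thesis
    using assms True by (simp add: is_cycle_def cyclic_nth_def)
next
  case False
  have "vs \<noteq> []"
    using assms by (auto simp: is_cycle_def)
  then have "l mod length vs < length vs"
    by simp
  then have last: "l mod length vs = length vs - 1"
    using False by linarith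
  then have "Suc l mod length vs = 0"
    using False \<open>vs \<noteq> []\<close> by (simp add: mod_Suc)
  then show ?thesis
    using assms last \<open>vs \<noteq> []\<close>
    by (simp add: is_cycle_def cyclic_nth_def last_conv_nth hd_conv_nth)
qed

lemma is_cycle_map_upt:
  assumes "i + 3 \<le> j" "inj_on x {i..<j}" "x j = x i"
    and "\<And>l. l \<in> {i..<j} \<Longrightarrow> x l \<in> fst G"
    and "\<And>l. l \<in> {i..<j} \<Longrightarrow> adj G (x l) (x (Suc l))"
  shows "is_cycle G (map x [i..<j])"
  unfolding is_cycle_def
proof (intro conjI allI impI)
  fix a
  assume "a + 1 < length (map x [i..<j])"
  then show "adj G (map x [i..<j] ! a) (map x [i..<j] ! (a + 1))"
    using assms(5)[of "i + a"] by simp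
next
  have "last (map x [i..<j]) = x (j - 1)" "Suc (j - 1) = j"
    using assms(1) by (auto simp: last_map)
  then show "adj G (last (map x [i..<j])) (hd (map x [i..<j]))"
    using assms(1,3) assms(5)[of "j - 1"] by (simp add: hd_map)
qed (use assms in \<open>auto simp: distinct_map\<close>)

lemma inj_on_cycle_edges:
  assumes "i + 3 \<le> j" "inj_on x {i..<j}" "x j = x i"
  shows "inj_on (\<lambda>l. {x l, x (Suc l)}) {i..<j}"
proof -
  have no_clash: False
    if "a < b" "a \<in> {i..<j}" "b \<in> {i..<j}" "{x a, x (Suc a)} = {x b, x (Suc b)}" for a b
  proof -
    have "x a \<noteq> x b"
      using inj_onD[OF assms(2) _ that(2,3)] that(1) by blast
    then have swap: "x a = x (Suc b)" "x (Suc a) = x b"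
      using that(4) by (auto simp: doubleton_eq_iff)
    show False
    proof (cases "Suc b = j")
      case True
      then have "a = i"
        using swap(1) assms(3) inj_onD[OF assms(2), of a i] that(2) assms(1) by simp
      moreover have "Suc i \<in> {i..<j}" "Suc i \<noteq> b"
        using assms(1) True by auto
      ultimately show False
        using swap(2) inj_onD[OF assms(2), of "Suc i" b] that(3) by blast
    next
      case False
      then have "Suc b \<in> {i..<j}"
        using that(3) by auto
      then show False
        using swap(1) inj_onD[OF assms(2), of a "Suc b"] that(1,2) by simp
    qed
  qed
  show ?thesis
  proof (rule inj_onI)
    fix a b
    assume "a \<in> {i..<j}" "b \<in> {i..<j}" "{x a, x (Suc a)} = {x b, x (Suc b)}"
    then show "a = b"
      using no_clash[of a b] no_clash[of b a] by (cases a b rule: linorder_cases) auto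
  qed
qed

lemma is_cycle_edge_eq_iff:
  assumes "is_cycle G vs" "a < length vs"
  shows "{cyclic_nth vs l, cyclic_nth vs (Suc l)} = {cyclic_nth vs a, cyclic_nth vs (Suc a)}
    \<longleftrightarrow> l mod length vs = a"
proof -
  let ?edge = "\<lambda>l. {cyclic_nth vs l, cyclic_nth vs (Suc l)}"
  have "3 \<le> length vs" "distinct vs"
    using assms(1) by (auto simp: is_cycle_def)
  then have "inj_on ?edge {0..<length vs}"
    by (intro inj_on_cycle_edges) (auto simp: inj_on_def cyclic_nth_def nth_eq_iff_index_eq)
  moreover have "?edge (l mod length vs) = ?edge l"
    by (simp add: cyclic_nth_def mod_Suc_eq)
  moreover have "l mod length vs < length vs"
    using \<open>3 \<le> length vs\<close> by (intro mod_less_divisor) linarith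
  ultimately show ?thesis
    using inj_on_eq_iff[of ?edge "{0..<length vs}" "l mod length vs" a] assms(2) by simp
qed

lemma twice_girth_le_even_closed_walk:
  assumes G: "simple_graph G" and girth: "\<forall>vs. is_cycle G vs \<longrightarrow> n \<le> length vs"
    and closed: "0 < m" "x m = x 0"
    and walk: "\<And>l. adj G (x l) (x (Suc l))"
    and nonbacktracking: "\<And>l. x (Suc (Suc l)) \<noteq> x l"
    and even: "\<And>e. even (card {l. l < m \<and> {x l, x (Suc l)} = e})"
  shows "2 * n \<le> m"
proof -
  obtain i j where ij: "i < j" "j \<le> m" "x j = x i" and inj_prefix: "inj_on x {..<j}"
    using first_repetition[OF closed] .
  have inj: "inj_on x {i..<j}"
    using inj_prefix by (rule inj_on_subset) auto
  have "j \<noteq> Suc i"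
    using simple_graph_adjD(3)[OF G walk[of i]] ij(3) by auto
  moreover have "j \<noteq> Suc (Suc i)"
    using nonbacktracking[of i] ij(3) by auto
  ultimately have long: "i + 3 \<le> j"
    using ij(1) by linarith
  have "is_cycle G (map x [i..<j])"
    using long inj ij(3) simple_graph_adjD(1)[OF G walk] walk by (rule is_cycle_map_upt)
  then have "n \<le> j - i"
    using girth by fastforce
  moreover have "2 * card {i..<j} \<le> m"
    using inj_on_cycle_edges[OF long inj ij(3)] by (rule two_card_le_if_even_fibres) (use ij(2) even in auto)
  ultimately show ?thesis
    by simp
qed

section \<open>The lift\<close>

lemma lift_vertices: "fst (lift G) = fst G \<times> (snd G \<rightarrow>\<^sub>E (UNIV :: bool set))"
  by (simp add: lift_def Let_def)

lemma PiE_differ_only_at_iff: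
  assumes "f \<in> E \<rightarrow>\<^sub>E (UNIV :: bool set)" "g \<in> E \<rightarrow>\<^sub>E UNIV" "e \<in> E"
  shows "(f e \<noteq> g e \<and> (\<forall>e'\<in>E. e' \<noteq> e \<longrightarrow> f e' = g e')) \<longleftrightarrow> g = f(e := \<not> f e)"
proof
  assume differ: "f e \<noteq> g e \<and> (\<forall>e'\<in>E. e' \<noteq> e \<longrightarrow> f e' = g e')"
  show "g = f(e := \<not> f e)"
  proof
    fix x
    show "g x = (f(e := \<not> f e)) x"
      using differ assms PiE_arb[OF assms(1)] PiE_arb[OF assms(2)] by (cases "x \<in> E") auto
  qed
qed auto

lemma toggle_in_PiE:
  assumes "f \<in> E \<rightarrow>\<^sub>E (UNIV :: bool set)" "e \<in> E"
  shows "f(e := \<not> f e) \<in> E \<rightarrow>\<^sub>E UNIV"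
  using assms by (auto simp: PiE_iff extensional_def)

lemma adj_lift_iff:
  "adj (lift G) (u, f) (w, h) \<longleftrightarrow>
     u \<in> fst G \<and> f \<in> snd G \<rightarrow>\<^sub>E UNIV \<and> w \<in> fst G \<and> {u, w} \<in> snd G \<and>
     h = f({u, w} := \<not> f {u, w})"
proof -
  define R where "R p q \<longleftrightarrow> p \<in> fst (lift G) \<and> q \<in> fst (lift G) \<and> {fst p, fst q} \<in> snd G \<and>
    snd p {fst p, fst q} \<noteq> snd q {fst p, fst q} \<and>
    (\<forall>e'\<in>snd G. e' \<noteq> {fst p, fst q} \<longrightarrow> snd p e' = snd q e')" for p q
  have edges: "snd (lift G) = {{p, q} | p q. R p q}"
    unfolding R_def by (auto simp: lift_def Let_def)
  have "R p q \<Longrightarrow> R q p" for p q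
    unfolding R_def by (auto simp: insert_commute)
  then have "adj (lift G) p q \<longleftrightarrow> R p q" for p q
    unfolding adj_def edges mem_Collect_eq doubleton_eq_iff by blast
  then show ?thesis
    using PiE_differ_only_at_iff[of f "snd G" h "{u, w}"] toggle_in_PiE[of f "snd G" "{u, w}"]
    by (auto simp: R_def lift_vertices)
qed

lemma lift_edge_endpoints:
  assumes "{p, q} \<in> snd (lift G)"
  shows "p \<in> fst (lift G)" "q \<in> fst (lift G)" "p \<noteq> q"
proof -
  obtain u f w h where pq: "p = (u, f)" "q = (w, h)"
    by fastforce
  then have "adj (lift G) (u, f) (w, h)"
    using assms by (simp add: adj_def)
  then show "p \<in> fst (lift G)" "q \<in> fst (lift G)" "p \<noteq> q"
    using toggle_in_PiE[of f "snd G" "{u, w}"] by (auto simp: pq adj_lift_iff lift_vertices fun_eq_iff)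
qed

lemma simple_graph_lift:
  assumes "simple_graph G"
  shows "simple_graph (lift G)"
proof -
  have "finite (fst (lift G))"
    using assms simple_graph_finite_edges[OF assms]
    by (auto simp: simple_graph_def lift_vertices intro!: finite_PiE)
  moreover have "\<forall>e\<in>snd (lift G). \<exists>p q. e = {p, q}"
    unfolding lift_def Let_def snd_conv by blast
  ultimately show ?thesis
    unfolding simple_graph_def using lift_edge_endpoints by metis
qed

lemma degree_lift:
  assumes "(u, f) \<in> fst (lift G)"
  shows "degree (lift G) (u, f) = degree G u"
proof -
  let ?above = "\<lambda>v. (v, f({u, v} := \<not> f {u, v}))"
  have "(w, h) \<in> fst (lift G) \<and> adj (lift G) (u, f) (w, h) \<longleftrightarrow>
      (w, h) \<in> ?above ` {v \<in> fst G. adj G u v}" for w h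
    using assms toggle_in_PiE[of f "snd G" "{u, w}"] unfolding adj_def[of G]
    by (auto simp: adj_lift_iff lift_vertices)
  then have "{q \<in> fst (lift G). adj (lift G) (u, f) q} = ?above ` {v \<in> fst G. adj G u v}"
    by (auto simp: set_eq_iff split_paired_All)
  moreover have "inj_on ?above {v \<in> fst G. adj G u v}"
    by (auto simp: inj_on_def)
  ultimately show ?thesis
    unfolding degree_def by (simp add: card_image)
qed

lemma regular_lift:
  assumes "regular G k"
  shows "regular (lift G) k"
  using assms by (auto simp: regular_def degree_lift lift_vertices)

lemma lift_cycle_length_ge:
  assumes G: "simple_graph G" and girth: "\<forall>vs. is_cycle G vs \<longrightarrow> n \<le> length vs"
    and cycle: "is_cycle (lift G) ws"
  shows "2 * n \<le> length ws"
proof -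
  define m where "m = length ws"
  have "3 \<le> m" "distinct ws" "ws \<noteq> []"
    using cycle by (auto simp: is_cycle_def m_def)
  define x where "x l = fst (cyclic_nth ws l)" for l
  define F where "F l = snd (cyclic_nth ws l)" for l
  have ws_at: "cyclic_nth ws l = (x l, F l)" for l
    by (simp add: x_def F_def)
  have walk: "adj G (x l) (x (Suc l))"
    and toggle: "F (Suc l) = (F l)({x l, x (Suc l)} := \<not> F l {x l, x (Suc l)})" for l
    using is_cycle_adj_cyclic_nth[OF cycle, of l] unfolding adj_def[of G]
    by (simp_all add: ws_at adj_lift_iff)
  have nonbacktracking: "x (Suc (Suc l)) \<noteq> x l" for l
  proof
    assume returns: "x (Suc (Suc l)) = x l"
    then have "F (Suc (Suc l)) = F l"
      using toggle[of l] toggle[of "Suc l"] by (auto simp: insert_commute fun_eq_iff)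
    then have "cyclic_nth ws (Suc (Suc l)) = cyclic_nth ws l"
      using returns by (simp add: ws_at)
    then show False
      using cyclic_nth_eq_iff[OF \<open>distinct ws\<close> \<open>ws \<noteq> []\<close>] Suc_Suc_mod_neq[OF \<open>3 \<le> m\<close>]
      by (simp add: m_def)
  qed
  have even: "even (card {l. l < m \<and> {x l, x (Suc l)} = e})" for e
    using toggles_parity[of m F "\<lambda>l. {x l, x (Suc l)}" e] toggle by (auto simp: F_def cyclic_nth_def m_def)
  have "x m = x 0"
    by (simp add: x_def cyclic_nth_def m_def)
  with \<open>3 \<le> m\<close> have "2 * n \<le> m"
    by (intro twice_girth_le_even_closed_walk[OF G girth _ _ walk nonbacktracking even]) auto
  then show ?thesis
    by (simp add: m_def)
qed

definition walk_parity :: "'a set set \<Rightarrow> (nat \<Rightarrow> 'a) \<Rightarrow> nat \<Rightarrow> 'a set \<Rightarrow> bool" where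
  "walk_parity E x j = (\<lambda>e\<in>E. odd (card {l. l < j \<and> {x l, x (Suc l)} = e}))"

lemma walk_parity_in_PiE: "walk_parity E x j \<in> E \<rightarrow>\<^sub>E UNIV"
  by (simp add: walk_parity_def)

lemma adj_lift_walk:
  assumes "\<And>l. x l \<in> fst G" "\<And>l. {x l, x (Suc l)} \<in> snd G"
  shows "adj (lift G) (x j, walk_parity (snd G) x j) (x (Suc j), walk_parity (snd G) x (Suc j))"
proof -
  let ?F = "walk_parity (snd G) x"
  have "?F (Suc j) = (?F j)({x j, x (Suc j)} := \<not> ?F j {x j, x (Suc j)})"
    using assms(2)[of j] by (auto simp: walk_parity_def card_fibre_less_Suc fun_eq_iff)
  then show ?thesis
    using assms walk_parity_in_PiE by (simp add: adj_lift_iff)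
qed

lemma walk_parity_twice_period:
  assumes "\<And>l. x (l + n) = x l"
  shows "walk_parity E x (2 * n) = walk_parity E x 0"
proof -
  have "card {l. l < 2 * n \<and> {x l, x (Suc l)} = e} = 2 * card {l. l < n \<and> {x l, x (Suc l)} = e}" for e
    by (rule card_fibre_twice_period) (metis assms add_Suc)
  then show ?thesis
    by (simp add: walk_parity_def)
qed

lemma lift_cycle_double_length:
  assumes cycle: "is_cycle G vs"
  shows "\<exists>ws. is_cycle (lift G) ws \<and> length ws = 2 * length vs"
proof -
  define n where "n = length vs"
  define x where "x = cyclic_nth vs"
  define F where "F = walk_parity (snd G) x"
  have "3 \<le> n" "distinct vs" "vs \<noteq> []" "set vs \<subseteq> fst G"
    using cycle by (auto simp: is_cycle_def n_def)
  have x_in: "x l \<in> fst G" for l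
    using \<open>vs \<noteq> []\<close> \<open>set vs \<subseteq> fst G\<close> cyclic_nth_in_set by (auto simp: x_def)
  have edge_in: "{x l, x (Suc l)} \<in> snd G" for l
    using is_cycle_adj_cyclic_nth[OF cycle, of l] by (simp add: adj_def x_def)
  have F_at: "F j {x a, x (Suc a)} = odd (card {l. l < j \<and> l mod n = a})" if "a < n" for j a
  proof -
    have "F j {x a, x (Suc a)} = odd (card {l. l < j \<and> {x l, x (Suc l)} = {x a, x (Suc a)}})"
      using edge_in[of a] by (simp add: F_def walk_parity_def)
    then show ?thesis
      using is_cycle_edge_eq_iff[OF cycle, of a] that by (simp add: x_def n_def)
  qed
  have "F (2 * n) = F 0"
    unfolding F_def n_def x_def by (rule walk_parity_twice_period) (simp add: cyclic_nth_add_length)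
  have sheets_differ: "(x a, F a) \<noteq> (x b, F b)" if "a < b" "b < 2 * n" for a b
  proof
    assume "(x a, F a) = (x b, F b)"
    then have "a mod n = b mod n" "F a = F b"
      using cyclic_nth_eq_iff[OF \<open>distinct vs\<close> \<open>vs \<noteq> []\<close>] by (auto simp: x_def n_def)
    then have "a < n" and "b = a + n"
      using that \<open>3 \<le> n\<close>
        mod_eq_below_double_iff[of "a mod n" n a] mod_eq_below_double_iff[of "a mod n" n b]
      by auto
    then have "\<not> F a {x a, x (Suc a)}" "F b {x a, x (Suc a)}"
      by (simp_all add: F_at card_residue_class_below)
    with \<open>F a = F b\<close> show False
      by simp
  qed
  have "is_cycle (lift G) (map (\<lambda>j. (x j, F j)) [0..<2 * n])"
  proof (rule is_cycle_map_upt)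
    show "inj_on (\<lambda>j. (x j, F j)) {0..<2 * n}"
      by (rule inj_onI) (metis atLeastLessThan_iff linorder_neqE_nat sheets_differ)
    show "(x (2 * n), F (2 * n)) = (x 0, F 0)"
      using \<open>F (2 * n) = F 0\<close> by (simp add: x_def cyclic_nth_def n_def)
    show "adj (lift G) (x l, F l) (x (Suc l), F (Suc l))" for l
      unfolding F_def using x_in edge_in by (rule adj_lift_walk)
    show "(x l, F l) \<in> fst (lift G)" for l
      using x_in by (simp add: F_def lift_vertices walk_parity_in_PiE)
  qed (use \<open>3 \<le> n\<close> in simp)
  then show ?thesis
    by (metis diff_zero length_map length_upt n_def)
qed

theorem proposition4p2:
  fixes G :: "'a graph" and k n :: nat
  assumes "simple_graph G" and "regular G k" and "min_cycle_length G n"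
  shows "simple_graph (lift G) \<and> regular (lift G) k \<and> min_cycle_length (lift G) (2 * n)"
proof (intro conjI)
  show "simple_graph (lift G)"
    using assms(1) by (rule simple_graph_lift)
  show "regular (lift G) k"
    using assms(2) by (rule regular_lift)
  obtain vs where "is_cycle G vs" "length vs = n"
    and girth: "\<forall>vs. is_cycle G vs \<longrightarrow> n \<le> length vs"
    using assms(3) unfolding min_cycle_length_def by blast
  then show "min_cycle_length (lift G) (2 * n)"
    unfolding min_cycle_length_def
    using lift_cycle_double_length lift_cycle_length_ge[OF assms(1) girth] by blast
qed

end
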